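(* Let $d\ge7$, $\epsilon>0$ and $\Delta\ge\sqrt d\,\epsilon$. Let $\Gamma\subseteq\{-1,1\}^{d-1}$ be a set such that any two distinct $x,y\in\Gamma$ satisfy $\sum_{j=1}^{d-1}\mathbf 1\{x_j\ne y_j\}>\frac{d-1}4$, and define \[ \Theta=\{(\Delta,\epsilon u_1,\dots,\epsilon u_{d-1}):(u_1,\dots,u_{d-1})\in\Gamma\}\subset\mathbb R^d. \] Then for all $\theta\ne\theta'\in\Theta$, the internal angle satisfies \[ \frac{\sqrt{d-1}\,\epsilon}{2\Delta}\le\angle(\theta,\theta')\le\frac\pi2. \]
   Context: For nonzero $\theta,\theta'\in\mathbb R^d$, the internal angle is $\angle(\theta,\theta')=\arccos\big(\langle\theta,\theta'\rangle/(\|\theta\|\|\theta'\|)\big)\in[0,\pi]$, with the Euclidean inner product and norm. *)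

theory Defs
  imports "HOL-Analysis.Analysis"
begin

text \<open>Vectors of R^n are represented as functions nat => real, with coordinates
  indexed by {0..<n} (values outside are irrelevant / taken to be 0).\<close>

definition inner_n :: "nat \<Rightarrow> (nat \<Rightarrow> real) \<Rightarrow> (nat \<Rightarrow> real) \<Rightarrow> real" where
  "inner_n n x y = (\<Sum>i<n. x i * y i)"

definition norm_n :: "nat \<Rightarrow> (nat \<Rightarrow> real) \<Rightarrow> real" where
  "norm_n n x = sqrt (inner_n n x x)"

definition angle_n :: "nat \<Rightarrow> (nat \<Rightarrow> real) \<Rightarrow> (nat \<Rightarrow> real) \<Rightarrow> real" where
  "angle_n n x y = arccos (inner_n n x y / (norm_n n x * norm_n n y))"

definition hypercube :: "nat \<Rightarrow> (nat \<Rightarrow> real) set" where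
  "hypercube m = {u. (\<forall>j<m. u j = 1 \<or> u j = -1) \<and> (\<forall>j\<ge>m. u j = 0)}"

definition hamming :: "nat \<Rightarrow> (nat \<Rightarrow> real) \<Rightarrow> (nat \<Rightarrow> real) \<Rightarrow> nat" where
  "hamming m x y = card {j. j < m \<and> x j \<noteq> y j}"

text \<open>The point (Delta, eps u_1, ..., eps u_{d-1}) of R^d (0-indexed, 0 beyond index d-1).\<close>
definition embed_pt :: "nat \<Rightarrow> real \<Rightarrow> real \<Rightarrow> (nat \<Rightarrow> real) \<Rightarrow> (nat \<Rightarrow> real)" where
  "embed_pt d \<Delta> \<epsilon> u = (\<lambda>i. if i = 0 then \<Delta> else if i < d then \<epsilon> * u (i - 1) else 0)"

end

theory Submission
  imports Defs
begin

text \<open>For hypercube points u, v at Hamming distance h, the embedded points have inner product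
  \<Delta>^2 + \<epsilon>^2 (m - 2h) and common squared norm N = \<Delta>^2 + m \<epsilon>^2, so the cosine of their
  angle is 1 - 2h \<epsilon>^2 / N. The bounds m/4 < h \<le> m and m \<epsilon>^2 \<le> \<Delta>^2 put this cosine
  in [0, 1 - t^2/2] with t = sqrt m \<epsilon> / (2\<Delta>), and cos t \<ge> 1 - t^2/2 turns this into
  t \<le> angle \<le> \<pi>/2.\<close>

lemma cos_ge_one_minus_sq_half: "1 - x\<^sup>2 / 2 \<le> cos (x::real)"
proof -
  have "cos x = 1 - 2 * (sin (x/2))\<^sup>2"
    using cos_double_sin[of "x/2"] by simp
  moreover have "\<bar>sin (x/2)\<bar>\<^sup>2 \<le> \<bar>x/2\<bar>\<^sup>2"
    by (rule power_mono) (use abs_sin_x_le_abs_x[of "x/2"] in auto)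
  ultimately show ?thesis
    by (simp add: power_divide)
qed

lemma le_arccos_of_le_one_minus_sq_half:
  fixes t c :: real
  assumes "0 \<le> t" "0 \<le> c" "c \<le> 1 - t\<^sup>2 / 2"
  shows "t \<le> arccos c"
proof -
  have "t\<^sup>2 \<le> 2\<^sup>2" using assms by simp
  then have "t \<le> pi"
    using assms(1) pi_gt3 by (smt (verit) power_mono_iff zero_less_numeral)
  have "arccos (cos t) \<le> arccos c"
    by (rule arccos_le_arccos) (use assms cos_ge_one_minus_sq_half[of t] in auto)
  then show ?thesis
    using arccos_cos[OF assms(1) \<open>t \<le> pi\<close>] by simp
qed

lemma hamming_le: "hamming m u v \<le> m"
  unfolding hamming_def by (rule card_mono[of "{..<m}", simplified]) auto

lemma hypercube_sum_prod_eq: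
  assumes "u \<in> hypercube m" "v \<in> hypercube m"
  shows "(\<Sum>j<m. u j * v j) = real m - 2 * real (hamming m u v)"
proof -
  have "(\<Sum>j<m. u j * v j) = (\<Sum>j<m. 1 - 2 * (if u j \<noteq> v j then 1 else 0))"
  proof (rule sum.cong)
    fix j assume "j \<in> {..<m}"
    then have "u j = 1 \<or> u j = -1" "v j = 1 \<or> v j = -1"
      using assms by (auto simp: hypercube_def)
    then show "u j * v j = 1 - 2 * (if u j \<noteq> v j then 1 else 0)" by auto
  qed simp
  also have "\<dots> = real m - 2 * (\<Sum>j<m. (if u j \<noteq> v j then 1 else 0))"
    by (simp add: sum_subtractf sum_distrib_left)
  also have "(\<Sum>j<m. (if u j \<noteq> v j then 1 else 0::real)) = real (card ({..<m} \<inter> {j. u j \<noteq> v j}))"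
    by (simp add: sum.If_cases)
  also have "{..<m} \<inter> {j. u j \<noteq> v j} = {j. j < m \<and> u j \<noteq> v j}" by auto
  finally show ?thesis by (simp add: hamming_def)
qed

lemma inner_n_embed_pt:
  "inner_n (Suc m) (embed_pt (Suc m) D e u) (embed_pt (Suc m) D e v) = D\<^sup>2 + e\<^sup>2 * (\<Sum>j<m. u j * v j)"
  unfolding inner_n_def embed_pt_def
  by (subst sum.lessThan_Suc_shift) (simp add: sum.lessThan_Suc_shift sum_distrib_left power2_eq_square algebra_simps)

lemma norm_n_embed_pt:
  assumes "u \<in> hypercube m"
  shows "norm_n (Suc m) (embed_pt (Suc m) D e u) = sqrt (D\<^sup>2 + e\<^sup>2 * real m)"
  unfolding norm_n_def inner_n_embed_pt
  using hypercube_sum_prod_eq[OF assms assms] by (simp add: hamming_def)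

lemma angle_n_embed_pt:
  assumes "u \<in> hypercube m" "v \<in> hypercube m" "D \<noteq> 0"
  shows "angle_n (Suc m) (embed_pt (Suc m) D e u) (embed_pt (Suc m) D e v)
    = arccos (1 - 2 * real (hamming m u v) * e\<^sup>2 / (D\<^sup>2 + e\<^sup>2 * real m))"
proof -
  have "0 < D\<^sup>2 + e\<^sup>2 * real m"
    using assms(3) by (simp add: add_pos_nonneg)
  then show ?thesis
    unfolding angle_n_def inner_n_embed_pt norm_n_embed_pt[OF assms(1)] norm_n_embed_pt[OF assms(2)]
      hypercube_sum_prod_eq[OF assms(1,2)]
    by (simp add: field_simps)
qed

lemma separated_cos_bounds:
  fixes h m e D :: real
  assumes "m < 4 * h" "h \<le> m" "m * e\<^sup>2 \<le> D\<^sup>2" "D \<noteq> 0"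
  defines "c \<equiv> 1 - 2 * h * e\<^sup>2 / (D\<^sup>2 + e\<^sup>2 * m)"
  shows "0 \<le> c" and "c \<le> 1 - (sqrt m * e / (2 * D))\<^sup>2 / 2"
proof -
  have "0 < m" "0 < D\<^sup>2" using assms(1,2,4) by auto
  then have N: "0 < D\<^sup>2 + e\<^sup>2 * m" by (simp add: add_pos_nonneg)
  have "h * e\<^sup>2 \<le> m * e\<^sup>2"
    using assms(2) by (simp add: mult_right_mono)
  then have "2 * h * e\<^sup>2 \<le> D\<^sup>2 + e\<^sup>2 * m"
    using assms(3) by (simp add: mult.commute)
  then show "0 \<le> c"
    unfolding c_def using N by simp
  have "m * (D\<^sup>2 + e\<^sup>2 * m) \<le> m * (2 * D\<^sup>2)"
    using assms(3) \<open>0 < m\<close> by (simp add: algebra_simps)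
  also have "\<dots> \<le> 8 * h * D\<^sup>2"
    using mult_right_mono[OF less_imp_le[OF assms(1)], of "D\<^sup>2"] by (simp add: algebra_simps)
  also have "\<dots> \<le> 16 * h * D\<^sup>2"
    using assms(1) \<open>0 < m\<close> \<open>0 < D\<^sup>2\<close> by simp
  finally have "m * (D\<^sup>2 + e\<^sup>2 * m) * e\<^sup>2 \<le> 16 * h * D\<^sup>2 * e\<^sup>2"
    by (rule mult_right_mono) simp
  then have "m * e\<^sup>2 / (8 * D\<^sup>2) \<le> 2 * h * e\<^sup>2 / (D\<^sup>2 + e\<^sup>2 * m)"
    using N \<open>0 < D\<^sup>2\<close> by (simp add: divide_simps algebra_simps)
  then show "c \<le> 1 - (sqrt m * e / (2 * D))\<^sup>2 / 2"
    unfolding c_def using \<open>0 < m\<close> by (simp add: power_divide power_mult_distrib)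
qed

theorem lemma5:
  fixes d :: nat and \<epsilon> \<Delta> :: real and \<Gamma> :: "(nat \<Rightarrow> real) set"
  assumes "d \<ge> 7" and "\<epsilon> > 0" and "\<Delta> \<ge> sqrt (real d) * \<epsilon>"
    and "\<Gamma> \<subseteq> hypercube (d - 1)"
    and "\<And>x y. x \<in> \<Gamma> \<Longrightarrow> y \<in> \<Gamma> \<Longrightarrow> x \<noteq> y \<Longrightarrow> real (hamming (d - 1) x y) > real (d - 1) / 4"
  shows "\<forall>\<theta>\<in>embed_pt d \<Delta> \<epsilon> ` \<Gamma>. \<forall>\<theta>'\<in>embed_pt d \<Delta> \<epsilon> ` \<Gamma>. \<theta> \<noteq> \<theta>' \<longrightarrow>
           sqrt (real d - 1) * \<epsilon> / (2 * \<Delta>) \<le> angle_n d \<theta> \<theta>' \<and> angle_n d \<theta> \<theta>' \<le> pi / 2"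
proof (intro ballI impI)
  fix \<theta> \<theta>' assume "\<theta> \<in> embed_pt d \<Delta> \<epsilon> ` \<Gamma>" "\<theta>' \<in> embed_pt d \<Delta> \<epsilon> ` \<Gamma>" "\<theta> \<noteq> \<theta>'"
  then obtain u v where uv: "u \<in> \<Gamma>" "v \<in> \<Gamma>" "u \<noteq> v"
    and \<theta>: "\<theta> = embed_pt d \<Delta> \<epsilon> u" "\<theta>' = embed_pt d \<Delta> \<epsilon> v" by auto
  define m where "m = d - 1"
  have d: "d = Suc m" using assms(1) by (simp add: m_def)
  have "0 < sqrt (real d) * \<epsilon>" using assms(1,2) by simp
  then have "0 < \<Delta>" using assms(3) by linarith
  have "real d * \<epsilon>\<^sup>2 \<le> \<Delta>\<^sup>2"
    using power_mono[OF assms(3), of 2] assms(2) by (simp add: power_mult_distrib)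
  moreover have "real m * \<epsilon>\<^sup>2 \<le> real d * \<epsilon>\<^sup>2" by (simp add: d algebra_simps)
  ultimately have "real m * \<epsilon>\<^sup>2 \<le> \<Delta>\<^sup>2" by linarith
  moreover have "real m < 4 * real (hamming m u v)" "real (hamming m u v) \<le> real m"
    using assms(5)[OF uv] hamming_le[of m u v] by (simp_all add: m_def)
  moreover have "u \<in> hypercube m" "v \<in> hypercube m" using uv assms(4) by (auto simp: m_def)
  ultimately show "sqrt (real d - 1) * \<epsilon> / (2 * \<Delta>) \<le> angle_n d \<theta> \<theta>' \<and> angle_n d \<theta> \<theta>' \<le> pi / 2"
    using separated_cos_bounds[of "real m" "real (hamming m u v)" \<epsilon> \<Delta>] \<open>0 < \<Delta>\<close> assms(2)
      le_arccos_of_le_one_minus_sq_half arccos_le_pi2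
    by (simp add: \<theta> d angle_n_embed_pt)
qed

end
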